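(* Let $p$ be an odd prime, $t,s$ positive integers with $p\nmid s$, $r=p^t$, $q=r^s$. Let $\eta$ be the quadratic multiplicative character of $\mathbb{F}_r$ (with $\eta(0)=0$), let $\varphi$ be a nontrivial multiplicative character of $\mathbb{F}_q$, and let $\overline{\varphi}^*$ denote the restriction of $\overline{\varphi}$ to $\mathbb{F}_r^*$. Put $$A=\sum_{x\in\mathbb{F}_q^*}\varphi(x)\,\eta(\mathrm{Tr}_{q/r}(x+1)).$$ Then $|A|=\sqrt q$ if the character $\eta\overline{\varphi}^*$ of $\mathbb{F}_r^*$ is nontrivial, and $|A|=\sqrt{q}/\sqrt{r}$ if $\eta\overline{\varphi}^*$ is trivial.
   Context: $\mathrm{Tr}_{q/r}$ is the trace map from $\mathbb{F}_q$ to $\mathbb{F}_r$. A multiplicative character of $\mathbb{F}_q$ is a homomorphism $\mathbb{F}_q^*\to\mathbb{C}^*$; $\overline{\varphi}$ is its complex conjugate; it is trivial if identically $1$. *)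

theory Defs
  imports Complex_Main "HOL-Computational_Algebra.Primes"
begin

text \<open>Finite field F_q is modelled as a finite field type 'a with CARD('a) = q.
  The subfield F_r (r = p^t, q = r^s) is the set of fixed points of x \<mapsto> x^r.\<close>

definition subfield_r :: "nat \<Rightarrow> 'a::{finite,field} set" where
  "subfield_r r = {x. x ^ r = x}"

definition trace_qr :: "nat \<Rightarrow> nat \<Rightarrow> 'a::{finite,field} \<Rightarrow> 'a" where
  "trace_qr r s x = (\<Sum>i<s. x ^ (r ^ i))"

definition quad_char_r :: "nat \<Rightarrow> 'a::{finite,field} \<Rightarrow> complex" where
  "quad_char_r r y =
     (if y = 0 then 0
      else if (\<exists>z \<in> subfield_r r. z ^ 2 = y) then 1 else -1)"

definition mult_char :: "('a::{finite,field} \<Rightarrow> complex) \<Rightarrow> bool" where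
  "mult_char \<phi> \<longleftrightarrow> (\<forall>x y. x \<noteq> 0 \<longrightarrow> y \<noteq> 0 \<longrightarrow> \<phi> (x * y) = \<phi> x * \<phi> y)
                    \<and> (\<forall>x. x \<noteq> 0 \<longrightarrow> \<phi> x \<noteq> 0)"

definition trivial_char :: "('a::{finite,field} \<Rightarrow> complex) \<Rightarrow> bool" where
  "trivial_char \<phi> \<longleftrightarrow> (\<forall>x. x \<noteq> 0 \<longrightarrow> \<phi> x = 1)"

end

theory Submission
  imports
    Defs "HOL-Computational_Algebra.Polynomial" "HOL-Number_Theory.Cong" "HOL-Library.Real_Mod"
begin

text \<open>
  Let \<psi> be the canonical additive character of F_r and \<psi>_q = \<psi> \<circ> Tr_q/r. Expanding
  \<eta>(Tr(x + 1)) G(\<eta>) = \<Sum>_c \<eta>(c) \<psi>(c Tr(x + 1)) and using Tr(c(x + 1)) = c Tr(x) + c s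
  for c in F_r, the sum over x becomes a Gauss sum of \<phi> over F_q:
  A G(\<eta>) = G(\<phi>) B with B = \<Sum>_c \<eta>(c) cnj(\<phi>(c)) \<psi>(s c), c ranging over F_r^*.
  Since p does not divide s, B = -1 if \<eta>\<phi>^* is trivial, and otherwise B is a Gauss sum
  of \<eta>\<phi>^* times a unit. The classical evaluation |G(\<chi>)| = sqrt(field size) for
  nontrivial \<chi> then gives both values of |A|.
\<close>

section \<open>Gauss sums\<close>

locale additive_char =
  fixes K :: "'a::field set" and \<psi> :: "'a \<Rightarrow> complex"
  assumes finite_K: "finite K"
    and zero_in_K: "0 \<in> K" and one_in_K: "1 \<in> K"
    and add_in_K: "x \<in> K \<Longrightarrow> y \<in> K \<Longrightarrow> x + y \<in> K"
    and mult_in_K: "x \<in> K \<Longrightarrow> y \<in> K \<Longrightarrow> x * y \<in> K"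
    and uminus_in_K: "x \<in> K \<Longrightarrow> - x \<in> K"
    and inverse_in_K: "x \<in> K \<Longrightarrow> inverse x \<in> K"
    and char_add: "x \<in> K \<Longrightarrow> y \<in> K \<Longrightarrow> \<psi> (x + y) = \<psi> x * \<psi> y"
    and norm_char: "x \<in> K \<Longrightarrow> norm (\<psi> x) = 1"
    and char_nontrivial: "\<exists>b\<in>K. \<psi> b \<noteq> 1"
begin

definition unitary_mult_char :: "('a \<Rightarrow> complex) \<Rightarrow> bool" where
  "unitary_mult_char \<chi> \<longleftrightarrow>
     (\<forall>x\<in>K-{0}. \<forall>y\<in>K-{0}. \<chi> (x * y) = \<chi> x * \<chi> y) \<and> (\<forall>x\<in>K-{0}. norm (\<chi> x) = 1)"

definition gauss_sum :: "('a \<Rightarrow> complex) \<Rightarrow> complex" where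
  "gauss_sum \<chi> = (\<Sum>x\<in>K-{0}. \<chi> x * \<psi> x)"

lemma diff_in_K: "x \<in> K \<Longrightarrow> y \<in> K \<Longrightarrow> x - y \<in> K"
  using add_in_K uminus_in_K by (metis diff_conv_add_uminus)

lemma divide_in_K: "x \<in> K \<Longrightarrow> y \<in> K \<Longrightarrow> x / y \<in> K"
  using mult_in_K inverse_in_K by (metis divide_inverse)

lemma char_zero: "\<psi> 0 = 1"
proof -
  have "\<psi> 0 = \<psi> 0 * \<psi> 0" using char_add[OF zero_in_K zero_in_K] by simp
  moreover have "\<psi> 0 \<noteq> 0" using norm_char[OF zero_in_K] by auto
  ultimately show ?thesis by (metis mult_cancel_left2)
qed

lemma char_uminus: assumes "x \<in> K" shows "\<psi> (- x) = cnj (\<psi> x)"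
proof -
  have "\<psi> x * \<psi> (- x) = 1" using char_add[OF assms uminus_in_K[OF assms]] char_zero by simp
  moreover have "\<psi> x * cnj (\<psi> x) = 1"
    using complex_norm_square[of "\<psi> x"] norm_char[OF assms] by simp
  ultimately show ?thesis by (metis mult.left_commute mult.right_neutral mult.commute)
qed

lemma sum_char: "(\<Sum>y\<in>K. \<psi> y) = 0"
proof -
  obtain b where b: "b \<in> K" "\<psi> b \<noteq> 1" using char_nontrivial by blast
  have "(\<Sum>y\<in>K. \<psi> y) = (\<Sum>y\<in>K. \<psi> (b + y))"
    by (rule sum.reindex_bij_witness[of _ "\<lambda>y. b + y" "\<lambda>y. y - b"])
       (auto simp: b add_in_K diff_in_K)
  also have "\<dots> = \<psi> b * (\<Sum>y\<in>K. \<psi> y)"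
    by (simp add: sum_distrib_left char_add b)
  finally have "(\<psi> b - 1) * (\<Sum>y\<in>K. \<psi> y) = 0" by (simp add: algebra_simps)
  thus ?thesis using b by simp
qed

lemma sum_char_nonzero_multiples:
  assumes "a \<in> K"
  shows "(\<Sum>x\<in>K-{0}. \<psi> (a * x)) = (if a = 0 then of_nat (card K - 1) else -1)"
proof (cases "a = 0")
  case True
  thus ?thesis using finite_K zero_in_K by (simp add: char_zero)
next
  case False
  have "(\<Sum>x\<in>K. \<psi> (a * x)) = (\<Sum>y\<in>K. \<psi> y)"
    by (rule sum.reindex_bij_witness[of _ "\<lambda>y. y / a" "\<lambda>x. a * x"])
       (auto simp: assms False mult_in_K divide_in_K)
  moreover have "(\<Sum>x\<in>K. \<psi> (a * x)) = 1 + (\<Sum>x\<in>K-{0}. \<psi> (a * x))"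
    using finite_K zero_in_K by (simp add: sum.remove char_zero)
  ultimately show ?thesis using False sum_char by (simp add: add_eq_0_iff)
qed

lemma unitary_mult_char_one: assumes "unitary_mult_char \<chi>" shows "\<chi> 1 = 1"
proof -
  have "\<chi> 1 = \<chi> 1 * \<chi> 1" and "norm (\<chi> 1) = 1"
    using assms one_in_K unfolding unitary_mult_char_def
    by (metis DiffI empty_iff insert_iff mult_1 one_neq_zero)+
  thus ?thesis by (metis mult_cancel_left2 norm_zero zero_neq_one)
qed

lemma unitary_mult_char_inverse:
  assumes "unitary_mult_char \<chi>" "x \<in> K" "x \<noteq> 0"
  shows "\<chi> (inverse x) = cnj (\<chi> x)"
proof -
  have "\<chi> x * \<chi> (inverse x) = 1"
    using assms unitary_mult_char_one[OF assms(1)] inverse_in_K[OF assms(2)]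
    unfolding unitary_mult_char_def
    by (metis DiffI inverse_nonzero_iff_nonzero right_inverse singletonD)
  moreover have "\<chi> x * cnj (\<chi> x) = 1"
    using complex_norm_square[of "\<chi> x"] assms unfolding unitary_mult_char_def by simp
  ultimately show ?thesis by (metis mult.left_commute mult.right_neutral mult.commute)
qed

lemma sum_mult_char_nontrivial:
  assumes "unitary_mult_char \<chi>" "c \<in> K" "c \<noteq> 0" "\<chi> c \<noteq> 1"
  shows "(\<Sum>x\<in>K-{0}. \<chi> x) = 0"
proof -
  have "(\<Sum>x\<in>K-{0}. \<chi> x) = (\<Sum>x\<in>K-{0}. \<chi> (c * x))"
    by (rule sum.reindex_bij_witness[of _ "\<lambda>x. c * x" "\<lambda>y. y / c"])
       (auto simp: assms mult_in_K divide_in_K)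
  also have "\<dots> = \<chi> c * (\<Sum>x\<in>K-{0}. \<chi> x)"
    using assms unfolding unitary_mult_char_def by (simp add: sum_distrib_left)
  finally have "(\<chi> c - 1) * (\<Sum>x\<in>K-{0}. \<chi> x) = 0" by (simp add: algebra_simps)
  thus ?thesis using assms by simp
qed

lemma gauss_sum_scaled:
  assumes "unitary_mult_char \<chi>" "a \<in> K" "a \<noteq> 0"
  shows "(\<Sum>x\<in>K-{0}. \<chi> x * \<psi> (a * x)) = cnj (\<chi> a) * gauss_sum \<chi>"
proof -
  have "(\<Sum>x\<in>K-{0}. \<chi> x * \<psi> (a * x)) = (\<Sum>y\<in>K-{0}. \<chi> (y / a) * \<psi> y)"
    by (rule sum.reindex_bij_witness[of _ "\<lambda>y. y / a" "\<lambda>x. a * x"])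
       (auto simp: assms mult_in_K divide_in_K)
  also have "\<dots> = (\<Sum>y\<in>K-{0}. cnj (\<chi> a) * (\<chi> y * \<psi> y))"
  proof (rule sum.cong[OF refl])
    fix y assume y: "y \<in> K - {0}"
    have "\<chi> (y / a) = \<chi> y * \<chi> (inverse a)"
      using assms y inverse_in_K[OF assms(2)] unfolding unitary_mult_char_def divide_inverse by auto
    thus "\<chi> (y / a) * \<psi> y = cnj (\<chi> a) * (\<chi> y * \<psi> y)"
      using unitary_mult_char_inverse[OF assms] by simp
  qed
  finally show ?thesis by (simp add: gauss_sum_def sum_distrib_left)
qed

lemma gauss_sum_times_cnj_expand:
  assumes "unitary_mult_char \<chi>"
  shows "gauss_sum \<chi> * cnj (gauss_sum \<chi>) = (\<Sum>z\<in>K-{0}. \<chi> z * (\<Sum>y\<in>K-{0}. \<psi> ((z - 1) * y)))"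
proof -
  let ?K = "K - {0}"
  have "(\<Sum>z\<in>?K. \<chi> z * \<psi> ((z - 1) * y)) = (\<Sum>x\<in>?K. (\<chi> x * \<psi> x) * cnj (\<chi> y * \<psi> y))"
    if y: "y \<in> ?K" for y
  proof (rule sum.reindex_bij_witness[of _ "\<lambda>x. x / y" "\<lambda>z. z * y"])
    fix z assume z: "z \<in> ?K"
    have "\<chi> (z * y) = \<chi> z * \<chi> y" using assms y z unfolding unitary_mult_char_def by auto
    moreover have "\<chi> y * cnj (\<chi> y) = 1"
      using complex_norm_square[of "\<chi> y"] assms y unfolding unitary_mult_char_def by simp
    moreover have "\<psi> (z * y) * cnj (\<psi> y) = \<psi> ((z - 1) * y)"
      using char_add[of "z * y" "- y"] char_uminus[of y] y z mult_in_K uminus_in_K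
      by (auto simp: algebra_simps)
    ultimately show "\<chi> (z * y) * \<psi> (z * y) * cnj (\<chi> y * \<psi> y) = \<chi> z * \<psi> ((z - 1) * y)"
      by (metis complex_cnj_mult mult.assoc mult.commute mult.left_commute mult_1)
  qed (use y in \<open>auto simp: mult_in_K divide_in_K\<close>)
  hence "gauss_sum \<chi> * cnj (gauss_sum \<chi>) = (\<Sum>y\<in>?K. \<Sum>z\<in>?K. \<chi> z * \<psi> ((z - 1) * y))"
    by (simp add: gauss_sum_def sum_distrib_left sum_distrib_right)
  thus ?thesis by (subst (asm) sum.swap) (simp add: sum_distrib_left)
qed

lemma gauss_sum_times_cnj:
  assumes "unitary_mult_char \<chi>" "c \<in> K" "c \<noteq> 0" "\<chi> c \<noteq> 1"
  shows "gauss_sum \<chi> * cnj (gauss_sum \<chi>) = of_nat (card K)"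
proof -
  have card_K: "card K \<ge> 1"
    using finite_K zero_in_K by (metis One_nat_def Suc_leI card_gt_0_iff empty_iff)
  have "gauss_sum \<chi> * cnj (gauss_sum \<chi>)
      = (\<Sum>z\<in>K-{0}. (if z = 1 then \<chi> z * of_nat (card K) else 0)) - (\<Sum>z\<in>K-{0}. \<chi> z)"
    unfolding gauss_sum_times_cnj_expand[OF assms(1)] sum_subtractf[symmetric]
    using sum_char_nonzero_multiples[of "_ - 1"] card_K
    by (intro sum.cong) (auto simp: diff_in_K one_in_K of_nat_diff algebra_simps)
  also have "\<dots> = of_nat (card K)"
    using sum_mult_char_nontrivial[OF assms] one_in_K finite_K unitary_mult_char_one[OF assms(1)]
    by (simp add: sum.delta)
  finally show ?thesis .
qed

lemma norm_gauss_sum: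
  assumes "unitary_mult_char \<chi>" "c \<in> K" "c \<noteq> 0" "\<chi> c \<noteq> 1"
  shows "norm (gauss_sum \<chi>) = sqrt (card K)"
proof -
  have "complex_of_real ((norm (gauss_sum \<chi>))\<^sup>2) = of_nat (card K)"
    using gauss_sum_times_cnj[OF assms] complex_norm_square by simp
  hence "(norm (gauss_sum \<chi>))\<^sup>2 = card K"
    by (metis of_real_eq_iff of_real_of_nat_eq)
  thus ?thesis by (metis norm_ge_zero real_sqrt_unique)
qed

end

section \<open>Counting in finite fields\<close>

lemma card_roots_le:
  fixes P :: "'a::{comm_ring_1,ring_no_zero_divisors} poly"
  assumes "P \<noteq> 0" "degree P \<le> d" "\<And>x. poly P x = 0 \<longleftrightarrow> Q x"
  shows "card {x. Q x} \<le> d"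
  using card_poly_roots_bound[OF assms(1)] assms(2,3) by simp

lemma card_power_eq_le:
  assumes "k \<ge> 1"
  shows "card {x::'a::field. x ^ k = c} \<le> k"
proof (rule card_roots_le[of "monom 1 k - [:c:]"])
  have "coeff (monom 1 k - [:c:]) k = 1" using assms by (simp add: coeff_pCons split: nat.split)
  thus "monom 1 k - [:c:] \<noteq> 0" by (metis coeff_0 zero_neq_one)
  show "degree (monom 1 k - [:c:]) \<le> k"
    by (rule degree_diff_le) (auto simp: degree_monom_le)
  show "poly (monom 1 k - [:c:]) x = 0 \<longleftrightarrow> x ^ k = c" for x
    by (simp add: poly_monom)
qed

lemma card_power_eq_self_le:
  assumes "k \<ge> 2"
  shows "card {x::'a::field. x ^ k = x} \<le> k"
proof (rule card_roots_le[of "monom 1 k - monom 1 1"])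
  have "coeff (monom 1 k - monom 1 1) k = (1::'a)" using assms by simp
  thus "monom 1 k - monom 1 1 \<noteq> (0::'a poly)" by (metis coeff_0 zero_neq_one)
  show "degree (monom 1 k - monom (1::'a) 1) \<le> k"
    by (rule degree_diff_le) (use assms in \<open>auto intro: order.trans[OF degree_monom_le]\<close>)
  show "poly (monom 1 k - monom 1 1) x = 0 \<longleftrightarrow> x ^ k = x" for x :: 'a
    unfolding poly_diff poly_monom by simp
qed

lemma card_trace_qr_zeros_le:
  assumes "b \<ge> 2" "m \<ge> 1"
  shows "card {x::'a::{finite,field}. trace_qr b m x = 0} \<le> b ^ (m - 1)"
  unfolding trace_qr_def
proof (rule card_roots_le[of "\<Sum>i<m. monom 1 (b ^ i)"])
  have "coeff (\<Sum>i<m. monom (1::'a) (b ^ i)) (b ^ (m - 1)) = (\<Sum>i<m. if i = m - 1 then 1 else 0)"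
    unfolding coeff_sum coeff_monom using assms by (intro sum.cong) auto
  also have "\<dots> = 1" using assms by (simp add: sum.delta)
  finally show "(\<Sum>i<m. monom (1::'a) (b ^ i)) \<noteq> 0" by (metis coeff_0 zero_neq_one)
  show "degree (\<Sum>i<m. monom (1::'a) (b ^ i)) \<le> b ^ (m - 1)"
  proof (rule degree_sum_le)
    fix i assume "i \<in> {..<m}"
    hence "b ^ i \<le> b ^ (m - 1)" using assms by (intro power_increasing) auto
    thus "degree (monom (1::'a) (b ^ i)) \<le> b ^ (m - 1)" using degree_monom_le order.trans by blast
  qed simp
  show "poly (\<Sum>i<m. monom 1 (b ^ i)) x = 0 \<longleftrightarrow> (\<Sum>i<m. x ^ (b ^ i)) = 0" for x :: 'a
    unfolding poly_sum poly_monom by simp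
qed

lemma card_UNIV_eq_card_kernel_times_card_range:
  fixes f :: "'a::{finite,ab_group_add} \<Rightarrow> 'b::ab_group_add"
  assumes add: "\<And>x y. f (x + y) = f x + f y"
  shows "card (UNIV::'a set) = card {x. f x = 0} * card (range f)"
proof -
  have fiber: "f -` {f a} = (\<lambda>x. x + a) ` {x. f x = 0}" for a
  proof (intro equalityI subsetI)
    fix y assume "y \<in> f -` {f a}"
    hence "f (y - a) = 0" using add[of "y - a" a] by (simp add: algebra_simps)
    thus "y \<in> (\<lambda>x. x + a) ` {x. f x = 0}" by (intro image_eqI[of _ _ "y - a"]) auto
  qed (auto simp: add)
  have UNIV_eq: "(UNIV::'a set) = (\<Union>b\<in>range f. f -` {b})" by auto
  have "card (UNIV::'a set) = (\<Sum>b\<in>range f. card (f -` {b}))"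
    by (subst UNIV_eq, rule card_UN_disjoint) auto
  also have "\<dots> = (\<Sum>b\<in>range f. card {x. f x = 0})"
    by (intro sum.cong) (auto simp: fiber card_image)
  finally show ?thesis by simp
qed

lemma power_card_minus_one_eq_one:
  fixes x :: "'a::{finite,field}"
  assumes "x \<noteq> 0"
  shows "x ^ (card (UNIV :: 'a set) - 1) = 1"
proof -
  let ?U = "UNIV - {0 :: 'a}"
  have "(\<Prod>y\<in>?U. x * y) = \<Prod>?U"
    by (rule prod.reindex_bij_witness[of _ "\<lambda>y. y / x" "\<lambda>y. x * y"]) (use assms in auto)
  hence "x ^ card ?U * \<Prod>?U = 1 * \<Prod>?U" by (simp add: prod.distrib)
  moreover have "\<Prod>?U \<noteq> 0" by simp
  ultimately show ?thesis by (simp add: card_Diff_singleton)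
qed

lemma power_card_eq_self:
  fixes x :: "'a::{finite,field}"
  shows "x ^ card (UNIV :: 'a set) = x"
proof (cases "x = 0")
  case False
  have "x ^ card (UNIV :: 'a set) = x * x ^ (card (UNIV :: 'a set) - 1)"
    using finite_UNIV_card_ge_0[where 'a = 'a] by (simp flip: power_Suc)
  thus ?thesis using power_card_minus_one_eq_one[OF False] by simp
qed (simp add: finite_UNIV_card_ge_0)

lemma power_power_eq_self: "(c::'a::monoid_mult) ^ b = c \<Longrightarrow> c ^ (b ^ i) = c"
  by (induction i) (simp_all add: power_mult mult.commute)

context
  fixes b k :: nat
  assumes prime_char: "prime CHAR('a::{finite,field})" and b_eq: "b = CHAR('a) ^ k"
begin

lemma trace_qr_add: "trace_qr b m (x + y :: 'a) = trace_qr b m x + trace_qr b m y"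
proof -
  have "(x + y) ^ (b ^ i) = x ^ (b ^ i) + y ^ (b ^ i)" for i
    by (rule freshmans_dream'[OF prime_char, where n = "k * i"]) (simp add: b_eq power_mult)
  thus ?thesis by (simp add: trace_qr_def sum.distrib)
qed

lemma trace_qr_power_base:
  assumes "(x::'a) ^ (b ^ m) = x"
  shows "trace_qr b m x ^ b = trace_qr b m x"
proof -
  have "trace_qr b m x ^ b = (\<Sum>i<m. x ^ (b ^ Suc i))"
    unfolding trace_qr_def freshmans_dream_sum'[OF prime_char b_eq]
    by (simp add: power_mult[symmetric] mult.commute)
  also have "\<dots> = (\<Sum>i<Suc m. x ^ (b ^ i)) - x ^ (b ^ 0)"
    by (subst sum.lessThan_Suc_shift) simp
  also have "\<dots> = trace_qr b m x"
    using assms by (simp add: trace_qr_def)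
  finally show ?thesis .
qed

lemma trace_qr_power: "trace_qr b m (x ^ b) = trace_qr b m (x::'a) ^ b"
  unfolding trace_qr_def freshmans_dream_sum'[OF prime_char b_eq]
  by (simp add: power_mult[symmetric] mult.commute)

end

lemma trace_qr_scale:
  assumes "(c::'a::{finite,field}) ^ b = c"
  shows "trace_qr b m (c * x) = c * trace_qr b m x"
  by (simp add: trace_qr_def power_mult_distrib power_power_eq_self[OF assms] sum_distrib_left)

section \<open>The subfield F_r and the relative trace\<close>

locale char_sum_setting =
  fixes \<phi> :: "'a::{finite,field} \<Rightarrow> complex" and p t s r q :: nat
  assumes prime_p: "prime p" and odd_p: "odd p" and t_pos: "t > 0" and s_pos: "s > 0"
    and p_not_dvd_s: "\<not> p dvd s" and r_def: "r = p ^ t" and q_def: "q = r ^ s"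
    and card_UNIV: "card (UNIV :: 'a set) = q"
    and mult_char_phi: "mult_char \<phi>" and nontrivial_phi: "\<not> trivial_char \<phi>"
begin

abbreviation K :: "'a set" where "K \<equiv> subfield_r r"
abbreviation Tr :: "'a \<Rightarrow> 'a" where "Tr \<equiv> trace_qr r s"

lemma CHAR_eq: "CHAR('a) = p"
proof -
  have "(\<Sum>x\<in>(UNIV::'a set). x + 1) = (\<Sum>x\<in>UNIV. x)"
    by (rule sum.reindex_bij_witness[of _ "\<lambda>x. x - 1" "\<lambda>x. x + 1"]) auto
  hence "of_nat q = (0::'a)" using card_UNIV by (simp add: sum.distrib)
  hence "CHAR('a) dvd p ^ (t * s)"
    by (metis of_nat_eq_0_iff_char_dvd q_def r_def power_mult)
  moreover have prime: "prime CHAR('a)" by (simp add: finite_imp_CHAR_pos prime_CHAR_semidom)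
  ultimately have "CHAR('a) dvd p" using prime_dvd_power by blast
  thus ?thesis using prime prime_p by (simp add: primes_dvd_imp_eq)
qed

lemma prime_CHAR: "prime CHAR('a)"
  using CHAR_eq prime_p by simp

lemma r_eq_CHAR_power: "r = CHAR('a) ^ t"
  by (simp add: CHAR_eq r_def)

lemma p_ge_3: "p \<ge> 3"
  using prime_ge_2_nat[OF prime_p] odd_p by (cases "p = 2") auto

lemma r_ge_3: "r \<ge> 3"
proof -
  have "p ^ 1 \<le> p ^ t" using t_pos p_ge_3 by (intro power_increasing) auto
  thus ?thesis using p_ge_3 r_def by simp
qed

lemma odd_r: "odd r"
  using odd_p r_def by simp

lemma power_q_eq_self: "(x::'a) ^ q = x"
  using power_card_eq_self[of x] card_UNIV by simp

lemma subfield_power_minus_one: assumes "y \<in> K" "y \<noteq> 0" shows "y ^ (r - 1) = 1"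
proof -
  have "y * y ^ (r - 1) = y ^ r" using r_ge_3 by (simp flip: power_Suc)
  also have "\<dots> = y" using assms by (simp add: subfield_r_def)
  finally show ?thesis using assms(2) by simp
qed

lemma zero_in_subfield: "0 \<in> K"
  using r_ge_3 by (simp add: subfield_r_def)

lemma one_in_subfield: "1 \<in> K"
  by (simp add: subfield_r_def)

lemma add_in_subfield: "x \<in> K \<Longrightarrow> y \<in> K \<Longrightarrow> x + y \<in> K"
  using freshmans_dream'[OF prime_CHAR r_eq_CHAR_power] by (simp add: subfield_r_def)

lemma mult_in_subfield: "x \<in> K \<Longrightarrow> y \<in> K \<Longrightarrow> x * y \<in> K"
  by (simp add: subfield_r_def power_mult_distrib)

lemma uminus_in_subfield: "x \<in> K \<Longrightarrow> - x \<in> K"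
  using odd_r by (simp add: subfield_r_def)

lemma inverse_in_subfield: "x \<in> K \<Longrightarrow> inverse x \<in> K"
  by (simp add: subfield_r_def power_inverse)

lemma of_nat_in_subfield: "of_nat n \<in> K"
  by (induction n) (auto simp: zero_in_subfield one_in_subfield add_in_subfield)

lemma trace_add: "Tr (x + y) = Tr x + Tr y"
  by (rule trace_qr_add[OF prime_CHAR r_eq_CHAR_power])

lemma trace_in_subfield: "Tr x \<in> K"
  using trace_qr_power_base[OF prime_CHAR r_eq_CHAR_power] power_q_eq_self q_def
  by (simp add: subfield_r_def)

lemma trace_scale: "c \<in> K \<Longrightarrow> Tr (c * x) = c * Tr x"
  by (simp add: trace_qr_scale subfield_r_def)

lemma trace_one: "Tr 1 = of_nat s"
  by (simp add: trace_qr_def)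

lemma card_subfield_and_trace_kernel: "card K = r \<and> card {x. Tr x = 0} = r ^ (s - 1)"
proof -
  txt \<open>The map x \<mapsto> x^r - x has kernel K and image inside the kernel of Tr; the root
    bounds card K \<le> r and card (ker Tr) \<le> r^(s-1) then force equality in both.\<close>
  define f where "f x = x ^ r - x" for x :: 'a
  have "f (x + y) = f x + f y" for x y
    using freshmans_dream'[OF prime_CHAR r_eq_CHAR_power] by (simp add: f_def)
  moreover have "{x. f x = 0} = K" by (auto simp: f_def subfield_r_def)
  ultimately have q_eq: "q = card K * card (range f)"
    using card_UNIV_eq_card_kernel_times_card_range[of f] card_UNIV by simp
  have "Tr (f x) = 0" for x
    using trace_add[of "f x" x] trace_qr_power[OF prime_CHAR r_eq_CHAR_power] trace_in_subfield
    by (simp add: f_def subfield_r_def)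
  hence range_le: "card (range f) \<le> card {x. Tr x = 0}" by (intro card_mono) auto
  have kernel_le: "card {x. Tr x = 0} \<le> r ^ (s - 1)"
    by (rule card_trace_qr_zeros_le) (use r_ge_3 s_pos in auto)
  have K_le: "card K \<le> r" using card_power_eq_self_le[of r] r_ge_3 by (simp add: subfield_r_def)
  have "r * r ^ (s - 1) = card K * card (range f)" using q_eq q_def s_pos by (cases s) auto
  also have "\<dots> \<le> card K * r ^ (s - 1)" using range_le kernel_le by simp
  finally have "card K = r" using K_le r_ge_3 by simp
  moreover from this have "card (range f) = r ^ (s - 1)"
    using q_eq q_def s_pos r_ge_3 by (cases s) auto
  ultimately show ?thesis using range_le kernel_le by simp
qed

lemma range_trace: "range Tr = K"
proof (rule card_subset_eq)
  have "q = r ^ (s - 1) * card (range Tr)"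
    using card_UNIV_eq_card_kernel_times_card_range[of Tr] trace_add card_UNIV
      card_subfield_and_trace_kernel by simp
  hence "card (range Tr) = r" using q_def s_pos r_ge_3 by (cases s) auto
  thus "card (range Tr) = card K" using card_subfield_and_trace_kernel by simp
qed (use trace_in_subfield in auto)

end

section \<open>The canonical additive character\<close>

definition unit_root :: "nat \<Rightarrow> nat \<Rightarrow> complex" where
  "unit_root n k = cis (2 * pi * real k / real n)"

lemma unit_root_add: "unit_root n (k + l) = unit_root n k * unit_root n l"
  by (simp add: unit_root_def cis_mult add_divide_distrib distrib_left)

lemma unit_root_mod: assumes "n > 0" shows "unit_root n (k mod n) = unit_root n k"
proof -
  have "unit_root n k = unit_root n (k mod n) * unit_root n (n * (k div n))"
    by (simp flip: unit_root_add)
  also have "unit_root n (n * (k div n)) = 1"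
    using assms by (auto simp: unit_root_def cis_eq_1_iff intro!: exI[of _ "int (k div n)"])
  finally show ?thesis by simp
qed

lemma unit_root_neq_one: assumes "0 < k" "k < n" shows "unit_root n k \<noteq> 1"
proof
  assume "unit_root n k = 1"
  then obtain m :: int where "2 * pi * real k / real n = of_int m * (2 * pi)"
    unfolding unit_root_def cis_eq_1_iff by blast
  hence "real k / real n = of_int m" using assms by (simp add: field_simps)
  moreover have "0 < real k / real n" "real k / real n < 1" using assms by auto
  ultimately have "0 < m" "m < 1" by simp_all
  thus False by simp
qed

context char_sum_setting
begin

lemma of_nat_eq_of_nat_iff_mod: "(of_nat m :: 'a) = of_nat n \<longleftrightarrow> m mod p = n mod p"
  by (simp add: of_nat_eq_iff_cong_CHAR CHAR_eq cong_def)

lemma prime_subfield_eq_of_nat: "{y::'a. y ^ p = y} = of_nat ` {..<p}"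
proof -
  have "of_nat k ^ p = (of_nat k :: 'a)" for k
    by (induction k) (use p_ge_3 freshmans_dream[OF prime_CHAR CHAR_eq[symmetric]] in simp_all)
  hence sub: "of_nat ` {..<p} \<subseteq> {y::'a. y ^ p = y}" by auto
  have "inj_on (of_nat :: nat \<Rightarrow> 'a) {..<p}"
    by (rule inj_onI) (simp add: of_nat_eq_of_nat_iff_mod)
  hence "card (of_nat ` {..<p} :: 'a set) = p" by (simp add: card_image)
  moreover have "card {y::'a. y ^ p = y} \<le> p"
    using card_power_eq_self_le[where 'a = 'a] p_ge_3 by simp
  moreover have "card (of_nat ` {..<p} :: 'a set) \<le> card {y::'a. y ^ p = y}"
    by (rule card_mono[OF _ sub]) simp
  ultimately show ?thesis using sub by (intro card_subset_eq[symmetric]) auto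
qed

text \<open>Meaningful only on the prime field {y. y ^ p = y}; elsewhere the choice is junk.\<close>

definition prime_field_index :: "'a \<Rightarrow> nat" where
  "prime_field_index y = (SOME k. of_nat k = y)"

lemma of_nat_prime_field_index:
  assumes "y ^ p = y"
  shows "of_nat (prime_field_index y) = y"
proof -
  have "y \<in> of_nat ` {..<p}" using assms by (subst prime_subfield_eq_of_nat[symmetric]) simp
  then obtain k where "of_nat k = y" by blast
  thus ?thesis unfolding prime_field_index_def by (rule someI)
qed

abbreviation absolute_trace :: "'a \<Rightarrow> 'a" where "absolute_trace \<equiv> trace_qr p t"

lemma absolute_trace_in_prime_subfield: "x \<in> K \<Longrightarrow> absolute_trace x ^ p = absolute_trace x"
  using trace_qr_power_base[OF prime_CHAR, of p 1 x t] CHAR_eq r_def by (simp add: subfield_r_def)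

lemma absolute_trace_nonzero: "\<exists>b\<in>K. absolute_trace b \<noteq> 0"
proof (rule ccontr)
  assume "\<not> ?thesis"
  hence "card K \<le> card {x::'a. absolute_trace x = 0}" by (intro card_mono) auto
  also have "\<dots> \<le> p ^ (t - 1)" by (rule card_trace_qr_zeros_le) (use p_ge_3 t_pos in auto)
  also have "\<dots> < p ^ t" using p_ge_3 t_pos by (intro power_strict_increasing) auto
  finally show False using card_subfield_and_trace_kernel r_def by simp
qed

definition add_char_r :: "'a \<Rightarrow> complex" where
  "add_char_r y = unit_root p (prime_field_index (absolute_trace y))"

definition add_char_q :: "'a \<Rightarrow> complex" where
  "add_char_q x = add_char_r (Tr x)"

lemma add_char_r_eq_of_nat:
  assumes "y \<in> K" "absolute_trace y = of_nat k"
  shows "add_char_r y = unit_root p k"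
proof -
  have "prime_field_index (absolute_trace y) mod p = k mod p"
    using of_nat_prime_field_index[OF absolute_trace_in_prime_subfield[OF assms(1)]] assms(2)
    by (simp add: of_nat_eq_of_nat_iff_mod)
  thus ?thesis unfolding add_char_r_def
    using unit_root_mod[of p] p_ge_3 by (metis gr0I not_numeral_le_zero)
qed

lemma add_char_r_add:
  assumes "x \<in> K" "y \<in> K"
  shows "add_char_r (x + y) = add_char_r x * add_char_r y"
proof -
  let ?i = "\<lambda>z. prime_field_index (absolute_trace z)"
  have "absolute_trace (x + y) = of_nat (?i x + ?i y)"
    using of_nat_prime_field_index[OF absolute_trace_in_prime_subfield] assms
      trace_qr_add[OF prime_CHAR, of p 1] CHAR_eq by simp
  hence "add_char_r (x + y) = unit_root p (?i x + ?i y)"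
    using assms add_in_subfield by (intro add_char_r_eq_of_nat) auto
  thus ?thesis by (simp add: add_char_r_def unit_root_add)
qed

lemma add_char_r_nontrivial: "\<exists>b\<in>K. add_char_r b \<noteq> 1"
proof -
  obtain b where b: "b \<in> K" "absolute_trace b \<noteq> 0" using absolute_trace_nonzero by blast
  define k where "k = prime_field_index (absolute_trace b)"
  have "(of_nat k :: 'a) \<noteq> 0"
    using of_nat_prime_field_index[OF absolute_trace_in_prime_subfield[OF b(1)]] b k_def by simp
  hence "0 < k mod p" "k mod p < p"
    using p_ge_3 by (auto simp: of_nat_eq_0_iff_char_dvd CHAR_eq dvd_eq_mod_eq_0 gr0I)
  hence "unit_root p (k mod p) \<noteq> 1" by (rule unit_root_neq_one)
  hence "add_char_r b \<noteq> 1"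
    unfolding add_char_r_def k_def[symmetric] using unit_root_mod p_ge_3 by simp
  thus ?thesis using b by blast
qed

lemma norm_add_char_r: "norm (add_char_r y) = 1"
  by (simp add: add_char_r_def unit_root_def)

sublocale R: additive_char K add_char_r
  by unfold_locales
    (auto simp: zero_in_subfield one_in_subfield add_in_subfield mult_in_subfield uminus_in_subfield
      inverse_in_subfield add_char_r_add add_char_r_nontrivial norm_add_char_r)

sublocale Q: additive_char "UNIV :: 'a set" add_char_q
proof unfold_locales
  show "add_char_q (x + y) = add_char_q x * add_char_q y" for x y
    by (simp add: add_char_q_def trace_add add_char_r_add trace_in_subfield)
  show "norm (add_char_q x) = 1" for x by (simp add: add_char_q_def norm_add_char_r)
  obtain b where "b \<in> K" "add_char_r b \<noteq> 1" using add_char_r_nontrivial by blast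
  moreover obtain a where "b = Tr a" using \<open>b \<in> K\<close> range_trace by blast
  ultimately show "\<exists>a\<in>UNIV. add_char_q a \<noteq> 1" by (auto simp: add_char_q_def)
qed auto

end

section \<open>The quadratic character\<close>

context char_sum_setting
begin

definition euler_exp :: nat where "euler_exp = (r - 1) div 2"

lemma two_euler_exp: "2 * euler_exp = r - 1"
  using odd_r unfolding euler_exp_def by presburger

lemma one_neq_minus_one: "(1::'a) \<noteq> - 1"
proof
  assume "(1::'a) = - 1"
  hence "(of_nat 2 :: 'a) = 0" by (simp add: eq_neg_iff_add_eq_0)
  hence "p dvd 2" using of_nat_eq_0_iff_char_dvd[of 2, where 'a = 'a] CHAR_eq by simp
  thus False using p_ge_3 by (auto dest: dvd_imp_le)
qed

lemma power_euler_exp_cases: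
  assumes "y \<in> K" "y \<noteq> 0"
  shows "y ^ euler_exp = 1 \<or> y ^ euler_exp = -1"
proof -
  have "(y ^ euler_exp)\<^sup>2 = 1"
    using subfield_power_minus_one[OF assms] two_euler_exp
    by (simp flip: power_mult add: mult.commute)
  thus ?thesis using power2_eq_1_iff by blast
qed

lemma card_nonzero_squares_ge: "euler_exp \<le> card {w \<in> K - {0}. \<exists>z\<in>K. z\<^sup>2 = w}"
proof -
  let ?S = "{w \<in> K - {0}. \<exists>z\<in>K. z\<^sup>2 = w}"
  have "K - {0} \<subseteq> (\<Union>w\<in>?S. {z. z\<^sup>2 = w})"
    by (auto simp: mult_in_subfield power2_eq_square)
  hence "card (K - {0}) \<le> card (\<Union>w\<in>?S. {z::'a. z\<^sup>2 = w})" by (intro card_mono) auto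
  also have "\<dots> \<le> (\<Sum>w\<in>?S. card {z::'a. z\<^sup>2 = w})" by (rule card_UN_le) simp
  also have "\<dots> \<le> (\<Sum>w\<in>?S. 2)" by (intro sum_mono card_power_eq_le) simp
  finally have "card (K - {0}) \<le> 2 * card ?S" by simp
  moreover have "card (K - {0}) = r - 1"
    using card_subfield_and_trace_kernel zero_in_subfield by simp
  ultimately show ?thesis using two_euler_exp by linarith
qed

lemma subfield_square_iff:
  assumes "y \<in> K" "y \<noteq> 0"
  shows "(\<exists>z\<in>K. z\<^sup>2 = y) \<longleftrightarrow> y ^ euler_exp = 1"
proof -
  define S where "S = {w \<in> K - {0}. \<exists>z\<in>K. z\<^sup>2 = w}"
  define R where "R = {w \<in> K - {0}. w ^ euler_exp = 1}"
  have "S \<subseteq> R"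
  proof
    fix w assume "w \<in> S"
    then obtain z where z: "z \<in> K" "z \<noteq> 0" "z\<^sup>2 = w" by (auto simp: S_def)
    hence "w ^ euler_exp = z ^ (2 * euler_exp)" by (simp add: power_mult)
    thus "w \<in> R" using \<open>w \<in> S\<close> subfield_power_minus_one[OF z(1,2)] two_euler_exp
      by (simp add: S_def R_def)
  qed
  moreover have "card R \<le> card S"
  proof -
    have "card R \<le> card {w::'a. w ^ euler_exp = 1}" by (intro card_mono) (auto simp: R_def)
    also have "\<dots> \<le> euler_exp"
      by (rule card_power_eq_le) (use two_euler_exp r_ge_3 in linarith)
    also have "\<dots> \<le> card S" using card_nonzero_squares_ge by (simp add: S_def)
    finally show ?thesis .
  qed
  ultimately have "S = R" using card_mono[of R S] by (intro card_subset_eq) auto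
  thus ?thesis using assms by (auto simp: S_def R_def set_eq_iff)
qed

lemma quad_char_eq:
  assumes "y \<in> K" "y \<noteq> 0"
  shows "quad_char_r r y = (if y ^ euler_exp = 1 then 1 else -1)"
  using subfield_square_iff[OF assms] assms by (simp add: quad_char_r_def)

abbreviation \<eta> :: "'a \<Rightarrow> complex" where "\<eta> \<equiv> quad_char_r r"

lemma quad_char_cases: "y \<in> K \<Longrightarrow> y \<noteq> 0 \<Longrightarrow> \<eta> y = 1 \<or> \<eta> y = -1"
  using quad_char_eq by auto

lemma quad_char_mult:
  assumes "x \<in> K" "x \<noteq> 0" "y \<in> K" "y \<noteq> 0"
  shows "\<eta> (x * y) = \<eta> x * \<eta> y"
proof -
  have "(x * y) ^ euler_exp = x ^ euler_exp * y ^ euler_exp" by (simp add: power_mult_distrib)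
  moreover have "x * y \<in> K" "x * y \<noteq> 0" using assms mult_in_subfield by auto
  ultimately show ?thesis
    using quad_char_eq assms one_neq_minus_one
      power_euler_exp_cases[OF assms(1,2)] power_euler_exp_cases[OF assms(3,4)] by (smt (verit) mult_minus1_right mult_1 minus_minus mult_minus_left)
qed

lemma quad_char_unitary: "R.unitary_mult_char \<eta>"
  unfolding R.unitary_mult_char_def using quad_char_mult quad_char_cases by fastforce

lemma quad_char_nontrivial: "\<exists>c\<in>K. c \<noteq> 0 \<and> \<eta> c \<noteq> 1"
proof (rule ccontr)
  assume "\<not> ?thesis"
  hence "K - {0} \<subseteq> {c. c ^ euler_exp = 1}"
    using quad_char_eq by (auto split: if_splits)
  hence "card (K - {0}) \<le> card {c::'a. c ^ euler_exp = 1}" by (intro card_mono) auto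
  also have "\<dots> \<le> euler_exp" by (rule card_power_eq_le) (use two_euler_exp r_ge_3 in linarith)
  finally show False
    using card_subfield_and_trace_kernel zero_in_subfield two_euler_exp r_ge_3 by simp
qed

lemma cnj_quad_char: "y \<in> K \<Longrightarrow> y \<noteq> 0 \<Longrightarrow> cnj (\<eta> y) = \<eta> y"
  by (metis quad_char_cases complex_cnj_one complex_cnj_minus)

end

section \<open>The character sum\<close>

context char_sum_setting
begin

lemma phi_mult: "x \<noteq> 0 \<Longrightarrow> y \<noteq> 0 \<Longrightarrow> \<phi> (x * y) = \<phi> x * \<phi> y"
  using mult_char_phi by (simp add: mult_char_def)

lemma phi_one: "\<phi> 1 = 1"
proof -
  have "\<phi> 1 = \<phi> 1 * \<phi> 1" using phi_mult[of 1 1] by simp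
  moreover have "\<phi> 1 \<noteq> 0" using mult_char_phi by (simp add: mult_char_def)
  ultimately show ?thesis by (metis mult_cancel_left2)
qed

lemma norm_phi: assumes "x \<noteq> 0" shows "norm (\<phi> x) = 1"
proof -
  have "\<phi> (x ^ n) = \<phi> x ^ n" for n
    by (induction n) (simp_all add: phi_one phi_mult assms)
  hence "\<phi> x ^ (q - 1) = 1"
    using power_card_minus_one_eq_one[OF assms] card_UNIV phi_one by metis
  moreover have "1 < q" unfolding q_def using s_pos r_ge_3 by (intro one_less_power) auto
  ultimately show ?thesis using power_eq_1_iff[of "\<phi> x" "q - 1"] by simp
qed

lemma phi_unitary: "Q.unitary_mult_char \<phi>"
  unfolding Q.unitary_mult_char_def using phi_mult norm_phi by auto

definition twisted_char :: "'a \<Rightarrow> complex" where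
  "twisted_char c = \<eta> c * cnj (\<phi> c)"

lemma twisted_char_unitary: "R.unitary_mult_char twisted_char"
  unfolding R.unitary_mult_char_def twisted_char_def
proof (intro conjI ballI)
  fix x y assume "x \<in> K - {0}" "y \<in> K - {0}"
  thus "\<eta> (x * y) * cnj (\<phi> (x * y)) = \<eta> x * cnj (\<phi> x) * (\<eta> y * cnj (\<phi> y))"
    using quad_char_mult[of x y] phi_mult[of x y] by simp
next
  fix x assume "x \<in> K - {0}"
  thus "norm (\<eta> x * cnj (\<phi> x)) = 1"
    using quad_char_cases[of x] norm_phi[of x] by (auto simp: norm_mult)
qed

lemma quad_char_gauss_sum_scaled:
  assumes "a \<in> K"
  shows "(\<Sum>c\<in>K-{0}. \<eta> c * add_char_r (c * a)) = \<eta> a * R.gauss_sum \<eta>"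
proof (cases "a = 0")
  case True
  obtain c where "c \<in> K" "c \<noteq> 0" "\<eta> c \<noteq> 1" using quad_char_nontrivial by blast
  hence "(\<Sum>c\<in>K-{0}. \<eta> c) = 0" using R.sum_mult_char_nontrivial[OF quad_char_unitary] by blast
  thus ?thesis using True R.char_zero by (simp add: quad_char_r_def)
next
  case False
  thus ?thesis
    using R.gauss_sum_scaled[OF quad_char_unitary assms False] cnj_quad_char[OF assms False]
    by (simp add: mult.commute)
qed

lemma quad_char_trace_expansion:
  "\<eta> (Tr (x + 1)) * R.gauss_sum \<eta>
     = (\<Sum>c\<in>K-{0}. \<eta> c * add_char_r (of_nat s * c) * add_char_q (c * x))"
proof -
  have "add_char_r (c * Tr (x + 1)) = add_char_r (of_nat s * c) * add_char_q (c * x)"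
    if "c \<in> K" for c
  proof -
    have "c * x + c = c * (x + 1)" by (simp add: algebra_simps)
    hence "add_char_r (c * Tr (x + 1)) = add_char_q (c * x + c)"
      using trace_scale[OF that] by (simp add: add_char_q_def)
    also have "\<dots> = add_char_q (c * x) * add_char_q c" by (rule Q.char_add) auto
    also have "add_char_q c = add_char_r (of_nat s * c)"
      using trace_scale[OF that, of 1] trace_one by (simp add: add_char_q_def mult.commute)
    finally show ?thesis by simp
  qed
  thus ?thesis using quad_char_gauss_sum_scaled[OF trace_in_subfield, of "x + 1"]
    by (simp add: mult.assoc)
qed

lemma char_sum_times_gauss_sum:
  "(\<Sum>x\<in>{x. x \<noteq> 0}. \<phi> x * \<eta> (Tr (x + 1))) * R.gauss_sum \<eta>
     = Q.gauss_sum \<phi> * (\<Sum>c\<in>K-{0}. twisted_char c * add_char_r (of_nat s * c))"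
proof -
  have nonzero: "{x::'a. x \<noteq> 0} = UNIV - {0}" by auto
  have "(\<Sum>x\<in>{x. x \<noteq> 0}. \<phi> x * \<eta> (Tr (x + 1))) * R.gauss_sum \<eta>
      = (\<Sum>x\<in>UNIV-{0}. \<Sum>c\<in>K-{0}. \<eta> c * add_char_r (of_nat s * c) * (\<phi> x * add_char_q (c * x)))"
    unfolding nonzero sum_distrib_right mult.assoc quad_char_trace_expansion
    by (simp add: sum_distrib_left mult_ac)
  also have "\<dots> = (\<Sum>c\<in>K-{0}.
      \<eta> c * add_char_r (of_nat s * c) * (\<Sum>x\<in>UNIV-{0}. \<phi> x * add_char_q (c * x)))"
    by (subst sum.swap) (simp add: sum_distrib_left)
  also have "\<dots> = (\<Sum>c\<in>K-{0}. \<eta> c * add_char_r (of_nat s * c) * (cnj (\<phi> c) * Q.gauss_sum \<phi>))"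
    by (intro sum.cong refl) (subst Q.gauss_sum_scaled[OF phi_unitary], auto)
  finally show ?thesis by (simp add: sum_distrib_left twisted_char_def mult_ac)
qed

lemma of_nat_s_nonzero: "(of_nat s :: 'a) \<noteq> 0"
  using p_not_dvd_s by (simp add: of_nat_eq_0_iff_char_dvd CHAR_eq)

lemma norm_twisted_sum:
  "norm (\<Sum>c\<in>K-{0}. twisted_char c * add_char_r (of_nat s * c))
     = (if \<forall>c\<in>K-{0}. twisted_char c = 1 then 1 else sqrt r)"
proof (cases "\<forall>c\<in>K-{0}. twisted_char c = 1")
  case True
  hence "(\<Sum>c\<in>K-{0}. twisted_char c * add_char_r (of_nat s * c)) = -1"
    using R.sum_char_nonzero_multiples[OF of_nat_in_subfield] of_nat_s_nonzero by simp
  thus ?thesis using True by simp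
next
  case False
  then obtain c where c: "c \<in> K" "c \<noteq> 0" "twisted_char c \<noteq> 1" by blast
  have "norm (twisted_char (of_nat s)) = 1"
    using twisted_char_unitary of_nat_in_subfield of_nat_s_nonzero
    by (simp add: R.unitary_mult_char_def)
  thus ?thesis unfolding if_not_P[OF False]
    using R.gauss_sum_scaled[OF twisted_char_unitary of_nat_in_subfield of_nat_s_nonzero]
      R.norm_gauss_sum[OF twisted_char_unitary c] card_subfield_and_trace_kernel
    by (simp add: norm_mult)
qed

theorem norm_char_sum:
  "norm (\<Sum>x\<in>{x. x \<noteq> 0}. \<phi> x * \<eta> (Tr (x + 1)))
     = (if \<forall>c\<in>K-{0}. twisted_char c = 1 then sqrt q / sqrt r else sqrt q)"
proof -
  have "norm (R.gauss_sum \<eta>) = sqrt r"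
    using R.norm_gauss_sum[OF quad_char_unitary] quad_char_nontrivial card_subfield_and_trace_kernel
    by auto
  moreover have "norm (Q.gauss_sum \<phi>) = sqrt q"
    using Q.norm_gauss_sum[OF phi_unitary] nontrivial_phi card_UNIV
    by (auto simp: trivial_char_def)
  ultimately have "norm (\<Sum>x\<in>{x. x \<noteq> 0}. \<phi> x * \<eta> (Tr (x + 1))) * sqrt r
      = sqrt q * norm (\<Sum>c\<in>K-{0}. twisted_char c * add_char_r (of_nat s * c))"
    using arg_cong[OF char_sum_times_gauss_sum, of norm] by (simp add: norm_mult)
  thus ?thesis using norm_twisted_sum r_ge_3 by (simp add: field_simps split: if_splits)
qed

end

theorem mainTheorem4:
  fixes \<phi> :: "'a::{finite,field} \<Rightarrow> complex"
    and p t s r q :: nat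
  assumes "prime p" "odd p" "t > 0" "s > 0" "\<not> p dvd s"
    and "r = p ^ t" "q = r ^ s" "card (UNIV :: 'a set) = q"
    and "mult_char \<phi>" "\<not> trivial_char \<phi>"
  defines "A \<equiv> (\<Sum>x \<in> {x::'a. x \<noteq> 0}. \<phi> x * quad_char_r r (trace_qr r s (x + 1)))"
  shows "cmod A = (if trivial_char (\<lambda>y. if y \<in> subfield_r r then quad_char_r r y * cnj (\<phi> y) else 1)
                    then sqrt q / sqrt r else sqrt q)"
proof -
  interpret char_sum_setting \<phi> p t s r q
    using assms(1-10) by unfold_locales
  have "trivial_char (\<lambda>y. if y \<in> subfield_r r then quad_char_r r y * cnj (\<phi> y) else 1)
        \<longleftrightarrow> (\<forall>c\<in>subfield_r r - {0}. twisted_char c = 1)"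
    by (auto simp: trivial_char_def twisted_char_def)
  thus ?thesis using norm_char_sum unfolding A_def by simp
qed

end
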